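(* Let $G$ be a finite graph, $X$ its graph C*-correspondence over $A=C(G^{(0)})$, and $\beta>0$. Then \[\operatorname{Tr}_\beta(A)=\{\tau\in\operatorname{Tr}(A):h_X^\tau<\beta\}\quad\text{and}\quad\operatorname{Avt}_\beta(A)=\{\tau\in\operatorname{Tr}(A):G^t\tau=e^\beta\tau\},\] where $\tau$ is identified with the vector $(\tau(p_{v_1}),\dots,\tau(p_{v_n}))^t$.
   Context: $G$ is a finite directed graph with vertices $v_1,\dots,v_n$, edges $G^{(1)}$, source/range maps $s,r$; adjacency matrix $G_{ij}=\#\{e:s(e)=v_i,r(e)=v_j\}$, $G^t$ its transpose. $A=C(G^{(0)})$ spanned by orthogonal projections $p_v$; $\operatorname{Tr}(A)$ its (tracial) states, i.e. probability vectors. The graph C*-correspondence $X$ is spanned by $x_e$, $e\in G^{(1)}$, with $\langle x_e,x_f\rangle=\delta_{e,f}p_{s(f)}$, $p_vx_e=\delta_{v,r(e)}x_e$, $x_ep_v=\delta_{s(e),v}x_e$; $\{x_e\}$ is a unit decomposition. For edge words $\mu=\mu_k\cdots\mu_1$, $x_\mu=x_{\mu_k}\otimes\cdots\otimes x_{\mu_1}$, $x_\emptyset=1$. $c_{\tau,\beta}=\sum_{k\ge0}e^{-k\beta}\sum_{|\mu|=k}\tau(\langle x_\mu,x_\mu\rangle)$; $\operatorname{Tr}_\beta(A)=\{\tau:c_{\tau,\beta}<\infty\}$; $\operatorname{Avt}_\beta(A)=\{\tau:\tau(a)=e^{-\beta}\sum_{e}\tau(\langle x_e,ax_e\rangle)\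 \forall a\in A\}$. $h_X^\tau=\limsup_k k^{-1}\log\sum_{|\mu|=k}\tau(\langle x_\mu,x_\mu\rangle)$, taken to be $0$ if the terms eventually vanish. *)

theory Defs
  imports "HOL-Analysis.Analysis"
begin

text \<open>Finite directed graph: vertices form a finite type 'v, edges a finite type 'e,
  with source and range maps s, r :: 'e \<Rightarrow> 'v.
  The coefficient algebra A = C(G^(0)) is 'v \<Rightarrow> complex (pointwise operations).\<close>

definition vproj :: "'v \<Rightarrow> 'v \<Rightarrow> complex" where
  "vproj v = (\<lambda>w. if w = v then 1 else 0)"

text \<open>Tracial states of A = probability vectors; evaluation of a state on a \<in> A.\<close>
definition is_state :: "('v::finite \<Rightarrow> real) \<Rightarrow> bool" where
  "is_state \<tau> \<longleftrightarrow> (\<forall>v. 0 \<le> \<tau> v) \<and> (\<Sum>v\<in>UNIV. \<tau> v) = 1"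

definition Tr_A :: "('v::finite \<Rightarrow> real) set" where
  "Tr_A = {\<tau>. is_state \<tau>}"

definition st_app :: "('v::finite \<Rightarrow> real) \<Rightarrow> ('v \<Rightarrow> complex) \<Rightarrow> complex" where
  "st_app \<tau> a = (\<Sum>v\<in>UNIV. complex_of_real (\<tau> v) * a v)"

text \<open>The A-valued inner product \<langle>x_e, a x_e\<rangle> = a(r e) p_{s e} in the graph correspondence
  (since a x_e = a(r e) x_e and \<langle>x_e,x_e\<rangle> = p_{s e}).\<close>
definition edge_ip :: "('e \<Rightarrow> 'v) \<Rightarrow> ('e \<Rightarrow> 'v) \<Rightarrow> 'e \<Rightarrow> ('v \<Rightarrow> complex) \<Rightarrow> ('v \<Rightarrow> complex)" where
  "edge_ip s r e a = (\<lambda>v. a (r e) * vproj (s e) v)"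

text \<open>Edge word \<mu> = \<mu>_k \<dots> \<mu>_1 is the list [\<mu>_k, ..., \<mu>_1]; x_\<mu> = x_{\<mu>_k} \<otimes> \<dots> \<otimes> x_{\<mu>_1}.
  word_ip s r \<mu> a = \<langle>x_\<mu>, a x_\<mu>\<rangle>, computed via the internal tensor product rule
  \<langle>x_e \<otimes> \<eta>, a (x_e \<otimes> \<eta>)\<rangle> = \<langle>\<eta>, \<langle>x_e, a x_e\<rangle> \<eta>\<rangle>, and x_[] = 1.\<close>
fun word_ip :: "('e \<Rightarrow> 'v) \<Rightarrow> ('e \<Rightarrow> 'v) \<Rightarrow> 'e list \<Rightarrow> ('v \<Rightarrow> complex) \<Rightarrow> ('v \<Rightarrow> complex)" where
  "word_ip s r [] a = a"
| "word_ip s r (e # \<nu>) a = word_ip s r \<nu> (edge_ip s r e a)"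

definition word_norm :: "('e \<Rightarrow> 'v) \<Rightarrow> ('e \<Rightarrow> 'v) \<Rightarrow> 'e list \<Rightarrow> ('v \<Rightarrow> complex)" where
  "word_norm s r \<mu> = word_ip s r \<mu> (\<lambda>_. 1)"

text \<open>\<Sum>_{|\<mu>|=k} \<tau>(\<langle>x_\<mu>,x_\<mu>\<rangle>) (a nonnegative real number; we take its real part).\<close>
definition level_sum :: "('e::finite \<Rightarrow> 'v::finite) \<Rightarrow> ('e \<Rightarrow> 'v) \<Rightarrow> ('v \<Rightarrow> real) \<Rightarrow> nat \<Rightarrow> real" where
  "level_sum s r \<tau> k = Re (\<Sum>\<mu>\<in>{\<mu>::'e list. length \<mu> = k}. st_app \<tau> (word_norm s r \<mu>))"

text \<open>Tr_\<beta>(A): states with c_{\<tau>,\<beta>} = \<Sum>_k e^{-k\<beta>} level_sum k finite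
  (nonnegative terms, so finiteness = summability).\<close>
definition Tr_beta :: "('e::finite \<Rightarrow> 'v::finite) \<Rightarrow> ('e \<Rightarrow> 'v) \<Rightarrow> real \<Rightarrow> ('v \<Rightarrow> real) set" where
  "Tr_beta s r \<beta> = {\<tau> \<in> Tr_A. summable (\<lambda>k. exp (- real k * \<beta>) * level_sum s r \<tau> k)}"

definition Avt_beta :: "('e::finite \<Rightarrow> 'v::finite) \<Rightarrow> ('e \<Rightarrow> 'v) \<Rightarrow> real \<Rightarrow> ('v \<Rightarrow> real) set" where
  "Avt_beta s r \<beta> = {\<tau> \<in> Tr_A. \<forall>a :: 'v \<Rightarrow> complex.
      st_app \<tau> a = complex_of_real (exp (- \<beta>)) * (\<Sum>e\<in>UNIV. st_app \<tau> (edge_ip s r e a))}"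

definition entropy :: "('e::finite \<Rightarrow> 'v::finite) \<Rightarrow> ('e \<Rightarrow> 'v) \<Rightarrow> ('v \<Rightarrow> real) \<Rightarrow> ereal" where
  "entropy s r \<tau> =
     (if (\<forall>\<^sub>F k in sequentially. level_sum s r \<tau> k = 0) then 0
      else limsup (\<lambda>k. ereal (ln (level_sum s r \<tau> k) / real k)))"

definition adj :: "('e::finite \<Rightarrow> 'v) \<Rightarrow> ('e \<Rightarrow> 'v) \<Rightarrow> 'v \<Rightarrow> 'v \<Rightarrow> nat" where
  "adj s r i j = card {e. s e = i \<and> r e = j}"

definition adj_transpose_apply :: "('e::finite \<Rightarrow> 'v::finite) \<Rightarrow> ('e \<Rightarrow> 'v) \<Rightarrow> ('v \<Rightarrow> real) \<Rightarrow> ('v \<Rightarrow> real)" where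
  "adj_transpose_apply s r \<tau> = (\<lambda>j. \<Sum>i\<in>UNIV. real (adj s r i j) * \<tau> i)"

end

theory Submission
  imports Defs
begin

(* The level sums are \<tau>(G^k 1), where G acts on functions on vertices by the adjacency
   matrix, so c_{\<tau>,\<beta>} = \<Sum>_k e^{-k\<beta>} \<tau>(G^k 1).  If the entropy is below \<beta>, this series is
   dominated by a geometric one.  Conversely, if it converges, let f = \<Sum>_k e^{-k\<beta>} G^k 1 on
   the set R of vertices where this series converges; R contains the support of \<tau> and is
   closed under edges.  On R we have f = 1 + e^{-\<beta>} G f and 1 \<le> f \<le> N, hence
   G f \<le> c f with c = (1 - 1/(2N)) e^\<beta> < e^\<beta>, so \<tau>(G^k 1) = O(c^k) and the entropy is at
   most ln c < \<beta>.  The averaging condition for Avt_\<beta>, tested on the projections p_v, is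
   the eigenvector equation G^t \<tau> = e^\<beta> \<tau>. *)

definition matvec :: "('v::finite \<Rightarrow> 'v \<Rightarrow> 'a::comm_semiring_0) \<Rightarrow> ('v \<Rightarrow> 'a) \<Rightarrow> 'v \<Rightarrow> 'a" where
  "matvec A f = (\<lambda>i. \<Sum>j\<in>UNIV. A i j * f j)"

lemma matvec_of_real:
  "matvec (\<lambda>i j. of_real (A i j)) (\<lambda>v. of_real (f v)) = (\<lambda>v. of_real (matvec A f v))"
  by (simp add: matvec_def)

lemma matvec_power_of_real:
  "(matvec (\<lambda>i j. of_real (A i j)) ^^ k) (\<lambda>v. of_real (f v)) = (\<lambda>v. of_real ((matvec A ^^ k) f v))"
  by (induction k) (simp_all add: matvec_of_real)

definition exp_growth_rate :: "(nat \<Rightarrow> real) \<Rightarrow> ereal" where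
  "exp_growth_rate L =
     (if \<forall>\<^sub>F k in sequentially. L k = 0 then 0 else limsup (\<lambda>k. ereal (ln (L k) / real k)))"

text \<open>Since \<open>ln 0 = 0\<close>, vanishing terms contribute \<open>0\<close> to the limsup;
  this is why \<open>\<beta> > 0\<close> is needed.\<close>

lemma exp_growth_rate_less_of_geometric_bound:
  fixes L :: "nat \<Rightarrow> real"
  assumes L_nonneg: "\<And>k. 0 \<le> L k" and L_le: "\<And>k. L k \<le> M * c ^ k"
    and "0 < M" "0 < c" "c < exp \<beta>" "0 < \<beta>"
  shows "exp_growth_rate L < ereal \<beta>"
proof -
  have ln_c: "ln c < \<beta>"
    using \<open>0 < c\<close> \<open>c < exp \<beta>\<close> by (metis ln_exp ln_less_cancel_iff exp_gt_zero)
  have bound: "ln (L k) / real k \<le> max 0 (ln M / real k + ln c)" for k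
  proof (cases "0 < L k \<and> 0 < k")
    case True
    have "ln (L k) \<le> ln (M * c ^ k)"
      using True L_le[of k] by simp
    also have "\<dots> = ln M + real k * ln c"
      using \<open>0 < M\<close> \<open>0 < c\<close> by (simp add: ln_mult ln_realpow)
    finally have "ln (L k) \<le> ln M + real k * ln c" .
    then have "ln (L k) / real k \<le> ln M / real k + ln c"
      using True by (simp add: field_simps)
    then show ?thesis by simp
  next
    case False
    then have "L k = 0 \<or> k = 0" using L_nonneg[of k] by auto
    then show ?thesis by auto
  qed
  have "(\<lambda>k. ereal (max 0 (ln M / real k + ln c))) \<longlonglongrightarrow> ereal (max 0 (ln c))"
    unfolding lim_ereal
    by (intro tendsto_max tendsto_const) (auto intro!: tendsto_eq_intros lim_const_over_n)
  then have "limsup (\<lambda>k. ereal (max 0 (ln M / real k + ln c))) = ereal (max 0 (ln c))"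
    by (intro lim_imp_Limsup) simp
  moreover have "limsup (\<lambda>k. ereal (ln (L k) / real k))
      \<le> limsup (\<lambda>k. ereal (max 0 (ln M / real k + ln c)))"
    by (intro Limsup_mono always_eventually allI) (subst ereal_less_eq(3), rule bound)
  ultimately have "limsup (\<lambda>k. ereal (ln (L k) / real k)) < ereal \<beta>"
    using ln_c \<open>0 < \<beta>\<close> by (simp add: order.strict_trans1)
  then show ?thesis
    using \<open>0 < \<beta>\<close> by (simp add: exp_growth_rate_def)
qed

lemma summable_of_exp_growth_rate_less:
  fixes L :: "nat \<Rightarrow> real"
  assumes L_nonneg: "\<And>k. 0 \<le> L k" and rate: "exp_growth_rate L < ereal \<beta>"
  shows "summable (\<lambda>k. exp (- real k * \<beta>) * L k)"
proof (cases "\<forall>\<^sub>F k in sequentially. L k = 0")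
  case True
  then have "\<forall>\<^sub>F k in sequentially. exp (- real k * \<beta>) * L k = 0"
    by (rule eventually_mono) simp
  then show ?thesis
    using summable_cong[of "\<lambda>k. exp (- real k * \<beta>) * L k" "\<lambda>_. 0"] by simp
next
  case False
  then have "limsup (\<lambda>k. ereal (ln (L k) / real k)) < ereal \<beta>"
    using rate by (simp add: exp_growth_rate_def)
  then obtain b where b: "limsup (\<lambda>k. ereal (ln (L k) / real k)) < ereal b" "ereal b < ereal \<beta>"
    using ereal_dense2 by blast
  have "\<forall>\<^sub>F k in sequentially. norm (exp (- real k * \<beta>) * L k) \<le> exp (b - \<beta>) ^ k"
    using Limsup_lessD[OF b(1)] eventually_gt_at_top[of 0]
  proof eventually_elim
    case (elim k)
    have "L k \<le> exp (real k * b)"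
    proof (cases "0 < L k")
      case True
      then have "ln (L k) < real k * b" using elim by (simp add: divide_less_eq mult.commute)
      then have "exp (ln (L k)) < exp (real k * b)" by simp
      then show ?thesis using True by simp
    next
      case False
      then have "L k = 0" using L_nonneg[of k] by simp
      then show ?thesis by simp
    qed
    then have "norm (exp (- real k * \<beta>) * L k) \<le> exp (- real k * \<beta>) * exp (real k * b)"
      using L_nonneg[of k] by simp
    also have "\<dots> = exp (real k * (b - \<beta>))"
      by (simp add: exp_add[symmetric] algebra_simps)
    also have "\<dots> = exp (b - \<beta>) ^ k"
      by (rule exp_of_nat_mult)
    finally show ?case .
  qed
  moreover have "summable (\<lambda>k. exp (b - \<beta>) ^ k)"
    using b(2) by (intro summable_geometric) simp
  ultimately show ?thesis by (rule summable_comparison_test_ev)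
qed

definition neumann_sum :: "('v::finite \<Rightarrow> 'v \<Rightarrow> real) \<Rightarrow> real \<Rightarrow> 'v \<Rightarrow> real" where
  "neumann_sum A t i =
     (if summable (\<lambda>m. t ^ m * (matvec A ^^ m) (\<lambda>_. 1) i)
      then \<Sum>m. t ^ m * (matvec A ^^ m) (\<lambda>_. 1) i else 0)"

context
  fixes A :: "'v::finite \<Rightarrow> 'v \<Rightarrow> real"
  assumes A_nonneg: "\<And>i j. 0 \<le> A i j"
begin

lemma matvec_nonneg: "(\<And>j. 0 \<le> f j) \<Longrightarrow> 0 \<le> matvec A f i"
  by (simp add: matvec_def A_nonneg sum_nonneg)

lemma matvec_power_one_nonneg: "0 \<le> (matvec A ^^ k) (\<lambda>_. 1) i"
  by (induction k arbitrary: i) (simp_all add: matvec_nonneg)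

lemma entry_mult_le_matvec: "(\<And>j. 0 \<le> f j) \<Longrightarrow> A i j * f j \<le> matvec A f i"
  unfolding matvec_def by (rule member_le_sum) (simp_all add: A_nonneg)

lemma neumann_sum_nonneg: "0 \<le> t \<Longrightarrow> 0 \<le> neumann_sum A t i"
  by (simp add: neumann_sum_def matvec_power_one_nonneg suminf_nonneg)

lemma summable_neumann_successor:
  assumes "0 < t" and summable: "summable (\<lambda>m. t ^ m * (matvec A ^^ m) (\<lambda>_. 1) i)"
    and "A i j \<noteq> 0"
  shows "summable (\<lambda>m. t ^ m * (matvec A ^^ m) (\<lambda>_. 1) j)"
proof (rule summable_comparison_test')
  have "0 < A i j" using A_nonneg[of i j] \<open>A i j \<noteq> 0\<close> by simp
  show "norm (t ^ m * (matvec A ^^ m) (\<lambda>_. 1) j)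
      \<le> t ^ Suc m * (matvec A ^^ Suc m) (\<lambda>_. 1) i / (t * A i j)" for m
    using entry_mult_le_matvec[of "(matvec A ^^ m) (\<lambda>_. 1)" i j] \<open>0 < t\<close> \<open>0 < A i j\<close>
    by (simp add: matvec_power_one_nonneg field_simps mult_left_mono)
  show "summable (\<lambda>m. t ^ Suc m * (matvec A ^^ Suc m) (\<lambda>_. 1) i / (t * A i j))"
    using summable_Suc_iff[of "\<lambda>m. t ^ m * (matvec A ^^ m) (\<lambda>_. 1) i"] summable
    by (intro summable_divide) blast
qed

lemma neumann_sum_eq:
  assumes "0 < t" and summable: "summable (\<lambda>m. t ^ m * (matvec A ^^ m) (\<lambda>_. 1) i)"
  shows "neumann_sum A t i = 1 + t * matvec A (neumann_sum A t) i"
proof -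
  let ?P = "\<lambda>m. (matvec A ^^ m) (\<lambda>_. 1)"
  have summable_j: "summable (\<lambda>m. A i j * (t ^ m * ?P m j))" for j
    using summable_neumann_successor[OF \<open>0 < t\<close> summable, of j] by (cases "A i j = 0") simp_all
  have entry: "A i j * neumann_sum A t j = (\<Sum>m. A i j * (t ^ m * ?P m j))" for j
    using summable_neumann_successor[OF \<open>0 < t\<close> summable, of j]
    by (cases "A i j = 0") (simp_all add: neumann_sum_def suminf_mult)
  have "neumann_sum A t i = 1 + (\<Sum>m. t ^ Suc m * ?P (Suc m) i)"
    using suminf_split_head[OF summable] summable by (simp add: neumann_sum_def)
  also have "(\<Sum>m. t ^ Suc m * ?P (Suc m) i) = (\<Sum>m. t * (\<Sum>j\<in>UNIV. A i j * (t ^ m * ?P m j)))"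
    by (simp add: matvec_def sum_distrib_left mult_ac)
  also have "\<dots> = t * (\<Sum>j\<in>UNIV. \<Sum>m. A i j * (t ^ m * ?P m j))"
    using summable_j by (simp add: suminf_mult summable_sum suminf_sum)
  also have "\<dots> = t * matvec A (neumann_sum A t) i"
    by (simp add: matvec_def entry)
  finally show ?thesis .
qed

lemma matvec_power_one_le_subinvariant:
  assumes R_closed: "\<And>i j. i \<in> R \<Longrightarrow> A i j \<noteq> 0 \<Longrightarrow> j \<in> R"
    and f_nonneg: "\<And>j. 0 \<le> f j" and f_ge_1: "\<And>i. i \<in> R \<Longrightarrow> 1 \<le> f i"
    and subinvariant: "\<And>i. i \<in> R \<Longrightarrow> matvec A f i \<le> c * f i" and "0 \<le> c"
    and "i \<in> R"
  shows "(matvec A ^^ k) (\<lambda>_. 1) i \<le> c ^ k * f i"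
  using \<open>i \<in> R\<close>
proof (induction k arbitrary: i)
  case 0
  then show ?case using f_ge_1 by simp
next
  case (Suc k)
  have "(matvec A ^^ Suc k) (\<lambda>_. 1) i = (\<Sum>j\<in>UNIV. A i j * (matvec A ^^ k) (\<lambda>_. 1) j)"
    by (simp add: matvec_def)
  also have "\<dots> \<le> (\<Sum>j\<in>UNIV. A i j * (c ^ k * f j))"
    using Suc R_closed by (intro sum_mono) (metis A_nonneg mult_left_mono mult_zero_left order_refl)
  also have "\<dots> = c ^ k * matvec A f i"
    by (simp add: matvec_def sum_distrib_left mult_ac)
  also have "\<dots> \<le> c ^ Suc k * f i"
    using mult_left_mono[OF subinvariant[OF Suc.prems], of "c ^ k"] \<open>0 \<le> c\<close> by (simp add: mult_ac)
  finally show ?case .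
qed

lemma geometric_bound_of_summable_weighted_powers:
  fixes \<tau> :: "'v \<Rightarrow> real"
  assumes \<tau>_nonneg: "\<And>v. 0 \<le> \<tau> v" and "0 < t"
    and summable: "summable (\<lambda>k. t ^ k * (\<Sum>v\<in>UNIV. \<tau> v * (matvec A ^^ k) (\<lambda>_. 1) v))"
  obtains M c where "0 < M" "0 < c" "c * t < 1"
    "\<And>k. (\<Sum>v\<in>UNIV. \<tau> v * (matvec A ^^ k) (\<lambda>_. 1) v) \<le> M * c ^ k"
proof -
  let ?P = "\<lambda>k. (matvec A ^^ k) (\<lambda>_. 1)"
  define R where "R = {i. summable (\<lambda>m. t ^ m * ?P m i)}"
  define f where "f = neumann_sum A t"
  define N where "N = 1 + (\<Sum>i\<in>UNIV. f i)"
  define c where "c = (1 - 1 / (2 * N)) / t"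
  have f_nonneg: "0 \<le> f i" for i
    unfolding f_def using \<open>0 < t\<close> by (simp add: neumann_sum_nonneg)
  have f_eq: "f i = 1 + t * matvec A f i" if "i \<in> R" for i
    using neumann_sum_eq[OF \<open>0 < t\<close>] that by (simp add: R_def f_def)
  have f_ge_1: "1 \<le> f i" if "i \<in> R" for i
    using f_eq[OF that] \<open>0 < t\<close> matvec_nonneg[of f i] f_nonneg by simp
  have f_le_N: "f i \<le> N" for i
    using member_le_sum[where f = f and i = i and A = UNIV] f_nonneg by (simp add: N_def)
  have "1 \<le> N" unfolding N_def using f_nonneg by (simp add: sum_nonneg)
  then have "0 < c" "c * t < 1"
    using \<open>0 < t\<close> by (simp_all add: c_def field_simps)
  have subinvariant: "matvec A f i \<le> c * f i" if "i \<in> R" for i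
  proof -
    have "f i / (2 * N) \<le> 1" using f_le_N[of i] \<open>1 \<le> N\<close> by simp
    then have "t * matvec A f i \<le> (1 - 1 / (2 * N)) * f i"
      using f_eq[OF that] by (simp add: field_simps)
    then show ?thesis using \<open>0 < t\<close> by (simp add: c_def field_simps)
  qed
  have R_closed: "j \<in> R" if "i \<in> R" "A i j \<noteq> 0" for i j
    using summable_neumann_successor[OF \<open>0 < t\<close>] that by (simp add: R_def)
  have support_in_R: "v \<in> R" if "0 < \<tau> v" for v
  proof -
    have "\<tau> v * ?P m v \<le> (\<Sum>w\<in>UNIV. \<tau> w * ?P m w)" for m
      by (rule member_le_sum) (simp_all add: \<tau>_nonneg matvec_power_one_nonneg)
    then have "norm (t ^ m * ?P m v) \<le> t ^ m * (\<Sum>w\<in>UNIV. \<tau> w * ?P m w) / \<tau> v" for m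
      using that \<open>0 < t\<close> by (simp add: matvec_power_one_nonneg field_simps mult_left_mono)
    then show ?thesis
      unfolding R_def using summable_divide[OF summable]
      by (blast intro: summable_comparison_test')
  qed
  have "(\<Sum>v\<in>UNIV. \<tau> v * ?P k v) \<le> ((\<Sum>v\<in>UNIV. \<tau> v) * N) * c ^ k" for k
  proof -
    have "\<tau> v * ?P k v \<le> \<tau> v * (N * c ^ k)" for v
    proof (cases "0 < \<tau> v")
      case True
      have "?P k v \<le> c ^ k * f v"
        by (rule matvec_power_one_le_subinvariant[OF R_closed f_nonneg f_ge_1 subinvariant])
          (use \<open>0 < c\<close> support_in_R[OF True] in simp_all)
      also have "\<dots> \<le> N * c ^ k"
        using f_le_N[of v] \<open>0 < c\<close> by (simp add: mult.commute mult_left_mono)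
      finally show ?thesis using True by (simp add: mult_left_mono)
    qed (use \<tau>_nonneg[of v] in simp)
    then have "(\<Sum>v\<in>UNIV. \<tau> v * ?P k v) \<le> (\<Sum>v\<in>UNIV. \<tau> v * (N * c ^ k))"
      by (rule sum_mono)
    then show ?thesis
      by (simp add: sum_distrib_right[symmetric] mult.assoc)
  qed
  moreover have "((\<Sum>v\<in>UNIV. \<tau> v) * N) * c ^ k \<le> ((1 + (\<Sum>v\<in>UNIV. \<tau> v)) * N) * c ^ k" for k
    using \<open>1 \<le> N\<close> \<open>0 < c\<close> by (intro mult_right_mono) simp_all
  moreover have "0 < (1 + (\<Sum>v\<in>UNIV. \<tau> v)) * N"
    using \<open>1 \<le> N\<close> \<tau>_nonneg by (simp add: sum_nonneg add_pos_nonneg)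
  ultimately show ?thesis
    using that \<open>0 < c\<close> \<open>c * t < 1\<close> by (meson order.trans)
qed

end

lemma sum_of_nat_card_fibres:
  fixes g :: "'e::finite \<Rightarrow> 'v::finite" and f :: "'v \<Rightarrow> 'a::comm_semiring_1"
  shows "(\<Sum>u\<in>UNIV. of_nat (card {e. P e \<and> g e = u}) * f u) = (\<Sum>e | P e. f (g e))"
proof -
  have "(\<Sum>u\<in>UNIV. of_nat (card {e. P e \<and> g e = u}) * f u)
      = (\<Sum>u\<in>UNIV. \<Sum>e | P e \<and> g e = u. f (g e))"
    by (intro sum.cong) auto
  also have "\<dots> = (\<Sum>e | P e. f (g e))"
    using sum.group[of "{e. P e}" UNIV g "\<lambda>e. f (g e)"] by simp
  finally show ?thesis .
qed

definition adj_matrix :: "('e::finite \<Rightarrow> 'v) \<Rightarrow> ('e \<Rightarrow> 'v) \<Rightarrow> 'v \<Rightarrow> 'v \<Rightarrow> 'a::semiring_1" where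
  "adj_matrix s r i j = of_nat (adj s r i j)"

lemma adj_matrix_nonneg: "0 \<le> (adj_matrix s r i j :: real)"
  by (simp add: adj_matrix_def)

lemma sum_edge_ip: "(\<lambda>v. \<Sum>e\<in>UNIV. edge_ip s r e a v) = matvec (adj_matrix s r) a"
proof
  fix v
  have "(\<Sum>e\<in>UNIV. edge_ip s r e a v) = (\<Sum>e | s e = v. a (r e))"
    by (simp add: edge_ip_def vproj_def if_distrib sum.If_cases eq_commute)
  also have "\<dots> = matvec (adj_matrix s r) a v"
    by (simp add: matvec_def adj_matrix_def adj_def sum_of_nat_card_fibres)
  finally show "(\<Sum>e\<in>UNIV. edge_ip s r e a v) = matvec (adj_matrix s r) a v" .
qed

lemma word_ip_sum:
  "finite I \<Longrightarrow> word_ip s r \<nu> (\<lambda>v. \<Sum>i\<in>I. g i v) = (\<lambda>v. \<Sum>i\<in>I. word_ip s r \<nu> (g i) v)"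
proof (induction \<nu> arbitrary: g)
  case (Cons e \<nu>)
  have "edge_ip s r e (\<lambda>v. \<Sum>i\<in>I. g i v) = (\<lambda>v. \<Sum>i\<in>I. edge_ip s r e (g i) v)"
    by (simp add: edge_ip_def sum_distrib_right)
  then show ?case using Cons by simp
qed simp

lemma lists_length_Suc_eq:
  "{\<mu>. length \<mu> = Suc k} = (\<lambda>(e, \<nu>). e # \<nu>) ` (UNIV \<times> {\<nu>. length \<nu> = k})"
  by (auto simp: length_Suc_conv)

lemma sum_word_ip_length:
  fixes s r :: "'e::finite \<Rightarrow> 'v::finite"
  shows "(\<Sum>\<mu> | length \<mu> = k. word_ip s r \<mu> a v) = (matvec (adj_matrix s r) ^^ k) a v"
proof (induction k arbitrary: a)
  case 0
  have "{\<mu>::'e list. length \<mu> = 0} = {[]}" by auto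
  then show ?case by simp
next
  case (Suc k)
  have fin: "finite {\<nu>::'e list. length \<nu> = k}"
    using finite_lists_length_eq[of "UNIV :: 'e set" k] by simp
  have "(\<Sum>\<mu> | length \<mu> = Suc k. word_ip s r \<mu> a v)
      = (\<Sum>e\<in>UNIV. \<Sum>\<nu> | length \<nu> = k. word_ip s r \<nu> (edge_ip s r e a) v)"
    unfolding lists_length_Suc_eq
    by (subst sum.reindex) (simp_all add: inj_on_def sum.cartesian_product split_def)
  also have "\<dots> = (\<Sum>\<nu> | length \<nu> = k. word_ip s r \<nu> (matvec (adj_matrix s r) a) v)"
    by (subst sum.swap) (simp add: word_ip_sum fin sum_edge_ip[symmetric])
  also have "\<dots> = (matvec (adj_matrix s r) ^^ Suc k) a v"
    by (simp add: Suc.IH funpow_Suc_right del: funpow.simps)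
  finally show ?case .
qed

lemma level_sum_eq:
  fixes s r :: "'e::finite \<Rightarrow> 'v::finite"
  shows "level_sum s r \<tau> k = (\<Sum>v\<in>UNIV. \<tau> v * (matvec (adj_matrix s r) ^^ k) (\<lambda>_. 1) v)"
proof -
  have adj_complex: "adj_matrix s r = (\<lambda>i j. complex_of_real (adj_matrix s r i j))"
    by (simp add: adj_matrix_def fun_eq_iff)
  have "(matvec (\<lambda>i j. complex_of_real (adj_matrix s r i j)) ^^ k) (\<lambda>_. complex_of_real 1)
      = (\<lambda>v. complex_of_real ((matvec (adj_matrix s r) ^^ k) (\<lambda>_. 1) v))"
    by (rule matvec_power_of_real)
  then have words: "(\<Sum>\<mu> | length \<mu> = k. word_norm s r \<mu> v)
      = complex_of_real ((matvec (adj_matrix s r) ^^ k) (\<lambda>_. 1) v)" for v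
    unfolding word_norm_def sum_word_ip_length by (subst adj_complex) simp
  have "(\<Sum>\<mu> | length \<mu> = k. st_app \<tau> (word_norm s r \<mu>))
      = (\<Sum>v\<in>UNIV. complex_of_real (\<tau> v) * (\<Sum>\<mu> | length \<mu> = k. word_norm s r \<mu> v))"
    unfolding st_app_def sum_distrib_left by (rule sum.swap)
  then show ?thesis
    unfolding level_sum_def words by simp
qed

lemma level_sum_nonneg: "\<tau> \<in> Tr_A \<Longrightarrow> 0 \<le> level_sum s r \<tau> k"
  unfolding level_sum_eq
  by (intro sum_nonneg mult_nonneg_nonneg matvec_power_one_nonneg)
    (auto simp: Tr_A_def is_state_def adj_matrix_nonneg)

lemma entropy_eq_exp_growth_rate: "entropy s r \<tau> = exp_growth_rate (level_sum s r \<tau>)"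
  by (simp add: entropy_def exp_growth_rate_def)

lemma summable_level_sum_iff_entropy_less:
  fixes s r :: "'e::finite \<Rightarrow> 'v::finite"
  assumes \<tau>: "\<tau> \<in> Tr_A" and "0 < \<beta>"
  shows "summable (\<lambda>k. exp (- real k * \<beta>) * level_sum s r \<tau> k) \<longleftrightarrow> entropy s r \<tau> < ereal \<beta>"
proof
  assume summable: "summable (\<lambda>k. exp (- real k * \<beta>) * level_sum s r \<tau> k)"
  have "(\<lambda>k. exp (- real k * \<beta>) * level_sum s r \<tau> k)
      = (\<lambda>k. exp (- \<beta>) ^ k * (\<Sum>v\<in>UNIV. \<tau> v * (matvec (adj_matrix s r) ^^ k) (\<lambda>_. 1) v))"
    by (simp add: level_sum_eq exp_of_nat_mult[symmetric])
  with summable obtain M c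
    where "0 < M" "0 < c" "c * exp (- \<beta>) < 1" "\<And>k. level_sum s r \<tau> k \<le> M * c ^ k"
    using geometric_bound_of_summable_weighted_powers[where A = "adj_matrix s r" and \<tau> = \<tau>
        and t = "exp (- \<beta>)", OF adj_matrix_nonneg] \<tau>
    unfolding level_sum_eq by (auto simp: Tr_A_def is_state_def)
  moreover from \<open>c * exp (- \<beta>) < 1\<close> have "c < exp \<beta>"
    by (simp add: exp_minus field_simps)
  ultimately show "entropy s r \<tau> < ereal \<beta>"
    unfolding entropy_eq_exp_growth_rate
    by (intro exp_growth_rate_less_of_geometric_bound level_sum_nonneg[OF \<tau>] \<open>0 < \<beta>\<close>)
next
  assume "entropy s r \<tau> < ereal \<beta>"
  then show "summable (\<lambda>k. exp (- real k * \<beta>) * level_sum s r \<tau> k)"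
    unfolding entropy_eq_exp_growth_rate
    by (intro summable_of_exp_growth_rate_less level_sum_nonneg[OF \<tau>])
qed

lemma st_app_vproj: "st_app \<tau> (vproj v) = complex_of_real (\<tau> v)"
  by (simp add: st_app_def vproj_def if_distrib cong: if_cong)

lemma st_app_eqI: "(\<And>a. st_app \<sigma> a = st_app \<tau> a) \<Longrightarrow> \<sigma> = \<tau>"
  by (metis st_app_vproj of_real_eq_iff ext)

lemma st_app_scale: "st_app (\<lambda>v. c * \<tau> v) a = complex_of_real c * st_app \<tau> a"
  by (simp add: st_app_def sum_distrib_left mult.assoc)

lemma sum_st_app_edge_ip:
  fixes s r :: "'e::finite \<Rightarrow> 'v::finite"
  shows "(\<Sum>e\<in>UNIV. st_app \<tau> (edge_ip s r e a)) = st_app (adj_transpose_apply s r \<tau>) a"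
proof -
  have "(\<Sum>e\<in>UNIV. st_app \<tau> (edge_ip s r e a)) = (\<Sum>e\<in>UNIV. complex_of_real (\<tau> (s e)) * a (r e))"
    by (simp add: st_app_def edge_ip_def vproj_def if_distrib cong: if_cong)
  also have "\<dots> = (\<Sum>(i, j)\<in>UNIV. of_nat (adj s r i j) * (complex_of_real (\<tau> i) * a j))"
    using prod_eq_iff[of "(s _, r _)"] sum_of_nat_card_fibres[where P = "\<lambda>_. True" and g = "\<lambda>e. (s e, r e)"
        and f = "\<lambda>(i, j). complex_of_real (\<tau> i) * a j"]
    by (simp add: adj_def split_def)
  also have "\<dots> = (\<Sum>j\<in>UNIV. \<Sum>i\<in>UNIV. of_nat (adj s r i j) * (complex_of_real (\<tau> i) * a j))"
    unfolding UNIV_Times_UNIV[symmetric] sum.cartesian_product[symmetric] by (rule sum.swap)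
  also have "\<dots> = st_app (adj_transpose_apply s r \<tau>) a"
    by (simp add: st_app_def adj_transpose_apply_def sum_distrib_left mult_ac)
  finally show ?thesis .
qed

lemma Avt_beta_eq:
  fixes s r :: "'e::finite \<Rightarrow> 'v::finite"
  shows "Avt_beta s r \<beta> = {\<tau> \<in> Tr_A. adj_transpose_apply s r \<tau> = (\<lambda>v. exp \<beta> * \<tau> v)}"
proof -
  have "(\<forall>a. st_app \<tau> a = complex_of_real (exp (- \<beta>)) * st_app (adj_transpose_apply s r \<tau>) a)
      \<longleftrightarrow> \<tau> = (\<lambda>v. exp (- \<beta>) * adj_transpose_apply s r \<tau> v)" for \<tau> :: "'v \<Rightarrow> real"
    by (auto simp: st_app_scale[symmetric] intro: st_app_eqI)
  also have "\<dots> \<tau> \<longleftrightarrow> adj_transpose_apply s r \<tau> = (\<lambda>v. exp \<beta> * \<tau> v)" for \<tau>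
    by (auto simp: fun_eq_iff exp_minus field_simps)
  finally show ?thesis
    by (simp add: Avt_beta_def sum_st_app_edge_ip)
qed

theorem corollary8p7:
  fixes s r :: "'e::finite \<Rightarrow> 'v::finite" and \<beta> :: real
  assumes "\<beta> > 0"
  shows "Tr_beta s r \<beta> = {\<tau> \<in> Tr_A. entropy s r \<tau> < ereal \<beta>}
     \<and> Avt_beta s r \<beta> = {\<tau> \<in> Tr_A. adj_transpose_apply s r \<tau> = (\<lambda>v. exp \<beta> * \<tau> v)}"
  using summable_level_sum_iff_entropy_less[OF _ assms]
  by (auto simp: Tr_beta_def Avt_beta_eq)

end
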